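(* Let $p\ge q$ and $n\ge 1$ be positive integers and let $B$ be a $p\times q$ matrix such that $B^T$ has full row rank. Let $C$ be the $(nq+p)\times(nq+p)$ block matrix $$C=\begin{bmatrix} 0 & B & B & \cdots & B\\ B^T & 0 & I & \cdots & I\\ B^T & I & 0 & \cdots & I\\ \vdots & \vdots & \vdots & \ddots & \vdots\\ B^T & I & I & \cdots & 0\end{bmatrix}$$ (one block of size $p$ followed by $n$ blocks of size $q$), and let $D$ be the $(np+q)\times(np+q)$ block matrix $$D=\begin{bmatrix} 0 & B^T & B^T & \cdots & B^T\\ B & 0 & I & \cdots & I\\ B & I & 0 & \cdots & I\\ \vdots & \vdots & \vdots & \ddots & \vdots\\ B & I & I & \cdots & 0\end{bmatrix}$$ (one block of size $q$ followed by $n$ blocks of size $p$). Then $C$ has $0$ as an eigenvalue with multiplicity at least $p-q$, and $D$ has $n-1$ as an eigenvalue with multiplicity at least $p-q$.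
   Context: $I$ denotes an identity matrix and $0$ a zero matrix of appropriate size. *)

theory Defs
  imports "Jordan_Normal_Form.DL_Rank" "Jordan_Normal_Form.Char_Poly"
begin

text \<open>Block matrix with one leading block of size m (zero block), followed by n blocks
  of size k.
  C = blockC p q n B   (M = B, p x q);   D = blockC q p n (B^T)  (M = B^T, q x p).\<close>

definition blockC :: "nat \<Rightarrow> nat \<Rightarrow> nat \<Rightarrow> real mat \<Rightarrow> real mat" where
  "blockC m k n M = mat (n * k + m) (n * k + m) (\<lambda>(i, j).
     if i < m \<and> j < m then 0
     else if i < m then M $$ (i, (j - m) mod k)
     else if j < m then (transpose_mat M) $$ ((i - m) mod k, j)
     else if (i - m) div k = (j - m) div k then 0
     else if (i - m) mod k = (j - m) mod k then 1 else 0)"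

end

theory Submission
  imports Defs
begin

text \<open>
  If \<open>B\<^sup>T v = 0\<close>, then \<open>(v, 0, \<dots>, 0)\<close> lies in the kernel of \<open>C\<close>, and \<open>(0, v, \<dots>, v)\<close> is an
  eigenvector of \<open>D\<close> for \<open>n - 1\<close>: the first block row gives \<open>n B\<^sup>T v = 0\<close>, and each of the
  other block rows picks up \<open>v\<close> from its \<open>n - 1\<close> identity blocks. As \<open>B\<^sup>T\<close> has rank \<open>q\<close>, its
  kernel has dimension \<open>p - q\<close>, and the geometric multiplicity of an eigenvalue is
  at most its algebraic multiplicity.
\<close>

lemma char_poly_matrix_mult_const_index:
  fixes A P :: "'a :: comm_ring_1 mat"
  assumes A: "A \<in> carrier_mat N N" and P: "P \<in> carrier_mat N N" and ij: "i < N" "j < N"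
  shows "(char_poly_matrix A * map_mat (\<lambda>a. [:a:]) P) $$ (i, j) = [:0, 1:] * [:P $$ (i, j):] - [:(A * P) $$ (i, j):]"
proof -
  have "(char_poly_matrix A * map_mat (\<lambda>a. [:a:]) P) $$ (i, j) =
      (\<Sum>k<N. ((if i = k then [:0, 1:] else 0) - [:A $$ (i, k):]) * [:P $$ (k, j):])"
    using ij A P unfolding char_poly_matrix_def
    by (auto simp: scalar_prod_def lessThan_atLeast0 intro!: sum.cong)
  also have "\<dots> = (\<Sum>k<N. if i = k then [:0, 1:] * [:P $$ (k, j):] else 0) - (\<Sum>k<N. [:A $$ (i, k) * P $$ (k, j):])"
    unfolding sum_subtractf[symmetric] by (intro sum.cong) (auto simp: left_diff_distrib)
  also have "\<dots> = [:0, 1:] * [:P $$ (i, j):] - [:(A * P) $$ (i, j):]"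
    using ij A P by (simp add: sum_to_poly scalar_prod_def lessThan_atLeast0)
  finally show ?thesis .
qed

lemma power_dvd_char_poly_if_eigencolumns:
  fixes A P :: "'a :: field mat"
  assumes A: "A \<in> carrier_mat N N" and P: "P \<in> carrier_mat N N" and detP: "det P \<noteq> 0"
    and S: "S \<subseteq> {..<N}"
    and eigen: "\<And>i j. i < N \<Longrightarrow> j \<in> S \<Longrightarrow> (A * P) $$ (i, j) = l * P $$ (i, j)"
  shows "[:-l, 1:] ^ card S dvd char_poly A"
proof -
  interpret const: comm_ring_hom "\<lambda>a::'a. [:a:]"
    by unfold_locales (auto simp: one_pCons)
  define X where "X = char_poly_matrix A"
  define Pp where "Pp = map_mat (\<lambda>a. [:a:]) P"
  define Q where "Q = mat N N (\<lambda>(i, j). if j \<in> S then Pp $$ (i, j) else (X * Pp) $$ (i, j))"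
  define d where "d j = (if j \<in> S then [:-l, 1:] else 1)" for j
  define Dg where "Dg = mat N N (\<lambda>(i, j). if i = j then d j else 0)"
  have X: "X \<in> carrier_mat N N" and Pp: "Pp \<in> carrier_mat N N"
    and Q: "Q \<in> carrier_mat N N" and Dg: "Dg \<in> carrier_mat N N"
    using A P unfolding X_def Pp_def Q_def Dg_def by auto
  have XP: "(X * Pp) $$ (i, j) = [:0, 1:] * Pp $$ (i, j) - [:(A * P) $$ (i, j):]"
    if "i < N" "j < N" for i j
    using char_poly_matrix_mult_const_index[OF A P that] that P unfolding X_def Pp_def by simp
  \<comment> \<open>The columns of \<open>(x I - A) P\<close> indexed by \<open>S\<close> are \<open>x - l\<close> times constant columns.\<close>
  have "X * Pp = Q * Dg"
  proof (rule eq_matI)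
    fix i j assume "i < dim_row (Q * Dg)" "j < dim_col (Q * Dg)"
    then have i: "i < N" and j: "j < N" using Q Dg by auto
    have "(Q * Dg) $$ (i, j) = Q $$ (i, j) * d j"
      using i j Q by (simp add: Dg_def scalar_prod_def if_distrib[of "(*) _"] cong: if_cong)
    also have "\<dots> = (X * Pp) $$ (i, j)"
      using i j P XP[OF i j] eigen[OF i] by (auto simp: Q_def d_def Pp_def algebra_simps)
    finally show "(X * Pp) $$ (i, j) = (Q * Dg) $$ (i, j)" ..
  qed (use X Pp Q Dg in auto)
  then have "char_poly A * [:det P:] = det Q * det Dg"
    using det_mult[OF X Pp] det_mult[OF Q Dg] unfolding X_def char_poly_def Pp_def by simp
  also have "det Dg = [:-l, 1:] ^ card S"
  proof -
    have "upper_triangular Dg" unfolding Dg_def by (auto simp: upper_triangular_def)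
    then have "det Dg = (\<Prod>j<N. d j)"
      using det_upper_triangular[OF _ Dg] by (simp add: prod_list_diag_prod Dg_def lessThan_atLeast0)
    also have "\<dots> = [:-l, 1:] ^ card S"
      using S by (simp add: d_def prod.If_cases Int_absorb1)
    finally show ?thesis .
  qed
  finally have "[:-l, 1:] ^ card S dvd char_poly A * [:det P:]"
    by (metis dvd_triv_right)
  then show ?thesis
    using detP by (simp add: dvd_smult_iff)
qed

lemma det_neq_0_if_eq_one_mat_off_block:
  fixes P :: "'a :: field mat"
  assumes P: "P \<in> carrier_mat N N"
    and off_block: "\<And>i j. i < N \<Longrightarrow> j < N \<Longrightarrow> i \<in> S \<or> j \<notin> S \<Longrightarrow> P $$ (i, j) = of_bool (i = j)"
  shows "det P \<noteq> 0"
proof -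
  have "x = 0\<^sub>v N" if x: "x \<in> carrier_vec N" and Px: "P *\<^sub>v x = 0\<^sub>v N" for x
  proof -
    have entry_0: "x $ i = 0"
      if i: "i < N" and Pij: "\<And>j. j < N \<Longrightarrow> P $$ (i, j) * x $ j = (if j = i then x $ i else 0)" for i
    proof -
      have "0 = (P *\<^sub>v x) $ i"
        using i Px by simp
      also have "\<dots> = (\<Sum>j<N. P $$ (i, j) * x $ j)"
        using i P x by (simp add: scalar_prod_def atLeast0LessThan)
      also have "\<dots> = x $ i"
        using i by (simp add: Pij)
      finally show ?thesis ..
    qed
    have x_S: "x $ i = 0" if "i \<in> S" "i < N" for i
      by (rule entry_0) (use that in \<open>auto simp: off_block\<close>)
    have "x $ i = 0" if i: "i < N" for i
    proof (rule entry_0[OF i])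
      fix j assume "j < N"
      then show "P $$ (i, j) * x $ j = (if j = i then x $ i else 0)"
        using i off_block[of i j] x_S[of j] by (cases "j \<in> S") auto
    qed
    then show "x = 0\<^sub>v N" using x by (intro eq_vecI) auto
  qed
  then show ?thesis
    using det_0_iff_vec_prod_zero_field[OF P] by blast
qed

lemma card_eigenvectors_le_order_char_poly:
  fixes A :: "'a :: field mat"
  assumes A: "A \<in> carrier_mat N N" and S: "S \<subseteq> {..<N}"
    and w: "\<And>j. j \<in> S \<Longrightarrow> w j \<in> carrier_vec N"
    and eigen: "\<And>j. j \<in> S \<Longrightarrow> A *\<^sub>v w j = l \<cdot>\<^sub>v w j"
    and pivot: "\<And>i j. i \<in> S \<Longrightarrow> j \<in> S \<Longrightarrow> w j $ i = of_bool (i = j)"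
  shows "card S \<le> order l (char_poly A)"
proof -
  define P where "P = mat N N (\<lambda>(i, j). if j \<in> S then w j $ i else of_bool (i = j))"
  have P: "P \<in> carrier_mat N N" unfolding P_def by simp
  have col_P: "col P j = w j" if "j \<in> S" for j
    using that S w[OF that] unfolding P_def by (auto intro!: eq_vecI)
  have "det P \<noteq> 0"
    using S by (intro det_neq_0_if_eq_one_mat_off_block[OF P, of S]) (auto simp: P_def pivot)
  moreover have "(A * P) $$ (i, j) = l * P $$ (i, j)" if i: "i < N" and j: "j \<in> S" for i j
  proof -
    have "(A * P) $$ (i, j) = (A *\<^sub>v w j) $ i"
      using i j A P S by (subst index_mult_mat) (auto simp: col_P)
    also have "\<dots> = l * P $$ (i, j)"
      using i j subsetD[OF S j] w[OF j] by (simp add: eigen P_def)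
    finally show ?thesis .
  qed
  ultimately have "[:-l, 1:] ^ card S dvd char_poly A"
    using power_dvd_char_poly_if_eigencolumns[OF A P _ S] by blast
  moreover have "char_poly A \<noteq> 0"
    using degree_monic_char_poly[OF A] by auto
  ultimately show ?thesis
    by (simp add: order_divides)
qed

lemma (in vectorspace) maximal_lin_indpt_spans:
  assumes S: "S \<subseteq> carrier V" and max: "maximal U (\<lambda>T. T \<subseteq> S \<and> lin_indpt T)"
  shows "S \<subseteq> span U"
proof
  fix s assume s: "s \<in> S"
  have U: "U \<subseteq> S" "lin_indpt U"
    using max unfolding maximal_def by auto
  then have U_carrier: "U \<subseteq> carrier V"
    using S by blast
  show "s \<in> span U"
  proof (rule ccontr)
    assume s_span: "s \<notin> span U"
    then have "lin_indpt (insert s U)"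
      using lin_dep_iff_in_span[OF U_carrier U(2), of s] s S in_own_span[OF U_carrier] by auto
    then have "insert s U = U"
      using max s U(1) unfolding maximal_def by blast
    then show False
      using s_span in_own_span[OF U_carrier] by blast
  qed
qed

lemma column_basis_expansion:
  fixes A :: "'a :: field mat"
  assumes A: "A \<in> carrier_mat n c"
  obtains J a where "J \<subseteq> {..<c}" "card J = vec_space.rank n A"
    "\<And>k r. k < c \<Longrightarrow> r < n \<Longrightarrow> A $$ (r, k) = (\<Sum>j\<in>J. a k j * A $$ (r, j))"
proof -
  interpret vec_space "TYPE('a)" n .
  have cols: "set (cols A) \<subseteq> carrier_vec n"
    using A cols_dim by blast
  obtain S where max: "maximal S (\<lambda>T. T \<subseteq> set (cols A) \<and> lin_indpt T)"
    using maximal_exists[of "\<lambda>T. T \<subseteq> set (cols A) \<and> lin_indpt T" "card (set (cols A))" "{}"]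
    by (meson List.finite_set card_mono empty_iff empty_subsetI finite_lin_indpt2 rev_finite_subset)
  then have S: "S \<subseteq> set (cols A)" and card_S: "card S = rank A"
    using rank_card_indpt[OF A] unfolding maximal_def by auto
  then have S_carrier: "S \<subseteq> carrier_vec n" and finite_S: "finite S"
    using cols finite_subset by auto
  have span_S: "col A k \<in> span S" if "k < c" for k
    using that A maximal_lin_indpt_spans[OF cols max] by (auto simp: cols_def)
  obtain b where b: "\<And>k. k < c \<Longrightarrow> lincomb (b k) S = col A k"
    using finite_in_span[OF finite_S S_carrier span_S] by metis
  have "\<exists>j. j < c \<and> col A j = s" if "s \<in> S" for s
    using that S A unfolding cols_def by force
  then obtain idx where idx: "\<And>s. s \<in> S \<Longrightarrow> idx s < c \<and> col A (idx s) = s"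
    by metis
  define J where "J = idx ` S"
  have inj_col: "inj_on (col A) J" and col_J: "col A ` J = S"
    unfolding J_def image_image using idx by (auto intro: inj_onI)
  have "inj_on idx S"
    using idx by (metis inj_onI)
  then have J: "J \<subseteq> {..<c}" "card J = rank A"
    unfolding J_def using idx card_S by (auto simp: card_image)
  moreover have "A $$ (r, k) = (\<Sum>j\<in>J. b k (col A j) * A $$ (r, j))" if k: "k < c" and r: "r < n" for k r
  proof -
    have "A $$ (r, k) = lincomb (b k) (col A ` J) $ r"
      using k r A b col_J by simp
    also have "\<dots> = (\<Sum>s\<in>col A ` J. b k s * s $ r)"
      using lincomb_index[OF r] S_carrier col_J by simp
    also have "\<dots> = (\<Sum>j\<in>J. b k (col A j) * col A j $ r)"
      by (simp only: sum.reindex[OF inj_col] comp_def)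
    also have "\<dots> = (\<Sum>j\<in>J. b k (col A j) * A $$ (r, j))"
      using J(1) r A by (intro sum.cong) auto
    finally show ?thesis .
  qed
  ultimately show ?thesis
    using that[of J "\<lambda>k j. b k (col A j)"] by blast
qed

lemma kernel_vectors_free_columns:
  fixes A :: "'a :: field mat"
  assumes A: "A \<in> carrier_mat n c"
  obtains K v where "K \<subseteq> {..<c}" "card K = c - vec_space.rank n A"
    "\<And>k. k \<in> K \<Longrightarrow> v k \<in> carrier_vec c"
    "\<And>k. k \<in> K \<Longrightarrow> A *\<^sub>v v k = 0\<^sub>v n"
    "\<And>i j. i \<in> K \<Longrightarrow> j \<in> K \<Longrightarrow> v j $ i = of_bool (i = j)"
proof -
  obtain J a where J: "J \<subseteq> {..<c}" "card J = vec_space.rank n A"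
    and a: "\<And>k r. k < c \<Longrightarrow> r < n \<Longrightarrow> A $$ (r, k) = (\<Sum>j\<in>J. a k j * A $$ (r, j))"
    using column_basis_expansion[OF A] by blast
  define K where "K = {..<c} - J"
  define v where "v k = vec c (\<lambda>i. of_bool (i = k) - (if i \<in> J then a k i else 0))" for k
  have "A *\<^sub>v v k = 0\<^sub>v n" if k: "k \<in> K" for k
  proof (rule eq_vecI)
    fix r assume "r < dim_vec (0\<^sub>v n :: 'a vec)"
    then have r: "r < n" by simp
    have "(A *\<^sub>v v k) $ r = (\<Sum>i<c. (if i = k then A $$ (r, i) else 0) - (if i \<in> J then a k i * A $$ (r, i) else 0))"
      using A r unfolding v_def by (auto simp: scalar_prod_def lessThan_atLeast0 algebra_simps intro!: sum.cong)
    also have "\<dots> = A $$ (r, k) - (\<Sum>i\<in>J. a k i * A $$ (r, i))"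
      using k J(1) unfolding K_def by (simp add: sum_subtractf sum.If_cases Int_absorb1)
    also have "\<dots> = 0"
      using a[of k r] k r unfolding K_def by simp
    finally show "(A *\<^sub>v v k) $ r = 0\<^sub>v n $ r"
      using r by simp
  qed (use A in simp)
  moreover have "card K = c - vec_space.rank n A"
    unfolding K_def using J by (simp add: card_Diff_subset finite_subset)
  ultimately show ?thesis
    using that[of K v] unfolding K_def v_def by auto
qed

lemma sum_lessThan_mult_mod:
  fixes h :: "nat \<Rightarrow> 'a :: comm_semiring_1"
  shows "(\<Sum>s<n * k. h (s mod k)) = of_nat n * (\<Sum>r<k. h r)"
proof -
  have "(\<Sum>s\<in>{j * k..<j * k + k}. h (s mod k)) = (\<Sum>r<k. h r)" for j
    using sum.shift_bounds_nat_ivl[of "\<lambda>s. h (s mod k)" 0 "j * k" k]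
    by (simp add: add.commute lessThan_atLeast0)
  then show ?thesis
    by (simp flip: sum.nat_group)
qed

lemma sum_lessThan_add:
  fixes N :: nat
  shows "(\<Sum>t<N + m. f t) = (\<Sum>t<m. f t) + (\<Sum>s<N. f (s + m))"
  by (induction N) (simp_all add: add.assoc)

lemma dim_blockC [simp]:
  "dim_row (blockC m k n M) = n * k + m" "dim_col (blockC m k n M) = n * k + m"
  unfolding blockC_def by simp_all

lemma blockC_index:
  assumes "i < n * k + m" and "j < n * k + m"
  shows "blockC m k n M $$ (i, j) =
    (if i < m \<and> j < m then 0
     else if i < m then M $$ (i, (j - m) mod k)
     else if j < m then transpose_mat M $$ ((i - m) mod k, j)
     else if (i - m) div k = (j - m) div k then 0
     else of_bool ((i - m) mod k = (j - m) mod k))"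
  using assms unfolding blockC_def by simp

lemma blockC_index_lower_right:
  assumes "m \<le> i" "i < n * k + m" "s < n * k"
  shows "blockC m k n M $$ (i, s + m) = of_bool (s mod k = (i - m) mod k) - of_bool (s = i - m)"
proof -
  have "s = i - m \<longleftrightarrow> s div k = (i - m) div k \<and> s mod k = (i - m) mod k"
    by (metis div_mult_mod_eq)
  then show ?thesis
    using assms by (auto simp: blockC_index)
qed

lemma blockC_mult_vec_index:
  assumes "i < n * k + m" and "w \<in> carrier_vec (n * k + m)"
  shows "(blockC m k n M *\<^sub>v w) $ i =
    (\<Sum>t<m. blockC m k n M $$ (i, t) * w $ t) + (\<Sum>s<n * k. blockC m k n M $$ (i, s + m) * w $ (s + m))"
  using assms by (simp add: scalar_prod_def atLeast0LessThan sum_lessThan_add)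

lemma blockC_mult_vec_head:
  assumes M: "M \<in> carrier_mat m k" and v: "v \<in> carrier_vec m"
    and ker: "transpose_mat M *\<^sub>v v = 0\<^sub>v k"
  shows "blockC m k n M *\<^sub>v vec (n * k + m) (\<lambda>i. if i < m then v $ i else 0) = 0\<^sub>v (n * k + m)"
proof (rule eq_vecI)
  fix i assume "i < dim_vec (0\<^sub>v (n * k + m) :: real vec)"
  then have i: "i < n * k + m" by simp
  let ?w = "vec (n * k + m) (\<lambda>i. if i < m then v $ i else 0)"
  have "(blockC m k n M *\<^sub>v ?w) $ i = (\<Sum>t<m. blockC m k n M $$ (i, t) * v $ t)"
    using blockC_mult_vec_index[OF i, of ?w] i by simp
  also have "\<dots> = 0"
  proof (cases "i < m")
    case True
    then show ?thesis by (simp add: blockC_index)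
  next
    case False
    define r where "r = (i - m) mod k"
    have r: "r < k"
      using False i unfolding r_def by (cases "k = 0") auto
    have "(\<Sum>t<m. blockC m k n M $$ (i, t) * v $ t) = (transpose_mat M *\<^sub>v v) $ r"
      using False i r M v unfolding r_def by (simp add: blockC_index scalar_prod_def lessThan_atLeast0)
    then show ?thesis
      using ker r by simp
  qed
  finally show "(blockC m k n M *\<^sub>v ?w) $ i = 0\<^sub>v (n * k + m) $ i"
    using i by simp
qed simp

lemma blockC_mult_vec_repeat:
  fixes n :: nat
  assumes M: "M \<in> carrier_mat m k" and v: "v \<in> carrier_vec k" and ker: "M *\<^sub>v v = 0\<^sub>v m"
  defines "w \<equiv> vec (n * k + m) (\<lambda>i. if i < m then 0 else v $ ((i - m) mod k))"
  shows "blockC m k n M *\<^sub>v w = (real n - 1) \<cdot>\<^sub>v w"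
proof (rule eq_vecI)
  fix i assume "i < dim_vec ((real n - 1) \<cdot>\<^sub>v w)"
  then have i: "i < n * k + m" unfolding w_def by simp
  have "(blockC m k n M *\<^sub>v w) $ i = (\<Sum>s<n * k. blockC m k n M $$ (i, s + m) * v $ (s mod k))"
    using blockC_mult_vec_index[OF i, of w] i unfolding w_def by simp
  also have "\<dots> = (real n - 1) * w $ i"
  proof (cases "i < m")
    case True
    have "(\<Sum>s<n * k. blockC m k n M $$ (i, s + m) * v $ (s mod k)) = (\<Sum>s<n * k. (\<lambda>r. M $$ (i, r) * v $ r) (s mod k))"
      using True i by (intro sum.cong) (auto simp: blockC_index)
    also have "\<dots> = real n * (\<Sum>r<k. M $$ (i, r) * v $ r)"
      by (rule sum_lessThan_mult_mod)
    also have "\<dots> = real n * (M *\<^sub>v v) $ i"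
      using True M v by (simp add: scalar_prod_def lessThan_atLeast0)
    finally show ?thesis
      using True ker unfolding w_def by simp
  next
    case False
    define a where "a = i - m"
    have a: "a < n * k" using i False unfolding a_def by simp
    have "(\<Sum>s<n * k. blockC m k n M $$ (i, s + m) * v $ (s mod k)) =
        (\<Sum>s<n * k. (\<lambda>r. of_bool (r = a mod k) * v $ r) (s mod k)) - (\<Sum>s<n * k. of_bool (s = a) * v $ (a mod k))"
      using i False unfolding a_def by (simp add: blockC_index_lower_right left_diff_distrib sum_subtractf)
    also have "\<dots> = real n * (\<Sum>r<k. of_bool (r = a mod k) * v $ r) - v $ (a mod k)"
      using a sum_lessThan_mult_mod[where h = "\<lambda>r. of_bool (r = a mod k) * v $ r" and n = n and k = k] by simp
    also have "\<dots> = (real n - 1) * v $ (a mod k)"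
      using a by (cases "k = 0") (simp_all add: left_diff_distrib)
    finally show ?thesis
      using False i unfolding w_def a_def by simp
  qed
  finally show "(blockC m k n M *\<^sub>v w) $ i = ((real n - 1) \<cdot>\<^sub>v w) $ i"
    using i unfolding w_def by simp
qed (simp add: w_def)

lemma left_nullity_le_order_0_char_poly_blockC:
  assumes M: "M \<in> carrier_mat m k"
  shows "m - vec_space.rank k (transpose_mat M) \<le> order 0 (char_poly (blockC m k n M))"
proof -
  have M_T: "transpose_mat M \<in> carrier_mat k m"
    using M by simp
  obtain K v where K: "K \<subseteq> {..<m}" "card K = m - vec_space.rank k (transpose_mat M)"
    and v: "\<And>j. j \<in> K \<Longrightarrow> v j \<in> carrier_vec m"
    and ker: "\<And>j. j \<in> K \<Longrightarrow> transpose_mat M *\<^sub>v v j = 0\<^sub>v k"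
    and pivot: "\<And>i j. i \<in> K \<Longrightarrow> j \<in> K \<Longrightarrow> v j $ i = of_bool (i = j)"
    using kernel_vectors_free_columns[OF M_T] by metis
  define w where "w j = vec (n * k + m) (\<lambda>i. if i < m then v j $ i else 0)" for j
  have "card K \<le> order 0 (char_poly (blockC m k n M))"
  proof (rule card_eigenvectors_le_order_char_poly)
    show "blockC m k n M *\<^sub>v w j = 0 \<cdot>\<^sub>v w j" if "j \<in> K" for j
      using blockC_mult_vec_head[OF M v ker, OF that that] unfolding w_def
      by (auto intro: eq_vecI)
  qed (use K pivot in \<open>auto simp: w_def carrier_matI\<close>)
  then show ?thesis
    using K by simp
qed

lemma nullity_le_order_char_poly_blockC:
  assumes M: "M \<in> carrier_mat m k" and n: "n \<ge> 1"
  shows "k - vec_space.rank m M \<le> order (real n - 1) (char_poly (blockC m k n M))"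
proof -
  obtain K v where K: "K \<subseteq> {..<k}" "card K = k - vec_space.rank m M"
    and v: "\<And>j. j \<in> K \<Longrightarrow> v j \<in> carrier_vec k"
    and ker: "\<And>j. j \<in> K \<Longrightarrow> M *\<^sub>v v j = 0\<^sub>v m"
    and pivot: "\<And>i j. i \<in> K \<Longrightarrow> j \<in> K \<Longrightarrow> v j $ i = of_bool (i = j)"
    using kernel_vectors_free_columns[OF M] by metis
  define S where "S = (\<lambda>j. j + m) ` K"
  define w where "w j = vec (n * k + m) (\<lambda>i. if i < m then 0 else v (j - m) $ ((i - m) mod k))" for j
  have K_less: "j < n * k" "j mod k = j" if "j \<in> K" for j
    using that K(1) n by (auto intro: less_le_trans[of j k "n * k"])
  have "card S \<le> order (real n - 1) (char_poly (blockC m k n M))"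
  proof (intro card_eigenvectors_le_order_char_poly)
    show "blockC m k n M *\<^sub>v w j = (real n - 1) \<cdot>\<^sub>v w j" if "j \<in> S" for j
      using that blockC_mult_vec_repeat[OF M v ker] unfolding S_def w_def by auto
  qed (use K_less pivot in \<open>auto simp: S_def w_def carrier_matI\<close>)
  moreover have "card S = card K"
    unfolding S_def by (simp add: card_image)
  ultimately show ?thesis
    using K by simp
qed

theorem lemma3p14:
  fixes p q n :: nat and B :: "real mat"
  assumes "q \<ge> 1" and "p \<ge> q" and "n \<ge> 1"
    and "B \<in> carrier_mat p q"
    and "vec_space.rank q (transpose_mat B) = q"
  shows "order 0 (char_poly (blockC p q n B)) \<ge> p - q \<and>
         order (real n - 1) (char_poly (blockC q p n (transpose_mat B))) \<ge> p - q"
proof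
  show "p - q \<le> order 0 (char_poly (blockC p q n B))"
    using left_nullity_le_order_0_char_poly_blockC[OF assms(4), of n] assms(5) by simp
  show "p - q \<le> order (real n - 1) (char_poly (blockC q p n (transpose_mat B)))"
    using nullity_le_order_char_poly_blockC[of "transpose_mat B" q p n] assms(3-5) by simp
qed

end
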